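(* Let $\langle \mathcal{P}, T\rangle$ be a VPT representation of a graph $G$, and let $q\in V(T)$ with $d_T(q)=h\geq 4$. Suppose there exist $y_1,y_2\in N_T(q)$ such that for every $v\in V(G)$, $\{y_1,y_2\}\not\subseteq V(P_v)$. Then there exists a VPT representation $\langle \mathcal{P}',T'\rangle$ of $G$ with $V(T')=V(T)\cup\{a_q\}$, where $a_q\notin V(T)$, such that $d_{T'}(a_q)=3$, $d_{T'}(q)=h-1$, and $d_{T'}(x)=d_T(x)$ for every $x\in V(T')\setminus\{q,a_q\}$.
   Context: All graphs are finite, simple and connected. A VPT representation $\langle \mathcal{P},T\rangle$ of a graph $G$ is a family $\mathcal{P}=(P_v)_{v\in V(G)}$ of subpaths of a tree $T$ such that two distinct vertices $v,v'$ of $G$ are adjacent iff $P_v$ and $P_{v'}$ share at least one vertex. *)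

theory Defs
  imports Main
begin

definition sgraph :: "'a set \<Rightarrow> ('a \<Rightarrow> 'a \<Rightarrow> bool) \<Rightarrow> bool" where
  "sgraph V E \<longleftrightarrow> finite V \<and> (\<forall>x y. E x y \<longrightarrow> x \<in> V \<and> y \<in> V)
     \<and> (\<forall>x y. E x y \<longrightarrow> E y x) \<and> (\<forall>x. \<not> E x x)"

definition connected_graph :: "'a set \<Rightarrow> ('a \<Rightarrow> 'a \<Rightarrow> bool) \<Rightarrow> bool" where
  "connected_graph V E \<longleftrightarrow> V \<noteq> {} \<and> (\<forall>x\<in>V. \<forall>y\<in>V. E\<^sup>*\<^sup>* x y)"

definition is_path :: "'a set \<Rightarrow> ('a \<Rightarrow> 'a \<Rightarrow> bool) \<Rightarrow> 'a list \<Rightarrow> bool" where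
  "is_path V E xs \<longleftrightarrow> xs \<noteq> [] \<and> distinct xs \<and> set xs \<subseteq> V
     \<and> (\<forall>i. Suc i < length xs \<longrightarrow> E (xs ! i) (xs ! Suc i))"

definition is_tree :: "'a set \<Rightarrow> ('a \<Rightarrow> 'a \<Rightarrow> bool) \<Rightarrow> bool" where
  "is_tree V E \<longleftrightarrow> sgraph V E \<and> connected_graph V E
     \<and> (\<forall>xs ys. is_path V E xs \<longrightarrow> is_path V E ys \<longrightarrow> hd xs = hd ys
          \<longrightarrow> last xs = last ys \<longrightarrow> xs = ys)"

definition nbhd :: "('a \<Rightarrow> 'a \<Rightarrow> bool) \<Rightarrow> 'a \<Rightarrow> 'a set" where
  "nbhd E x = {y. E x y}"

definition degree :: "('a \<Rightarrow> 'a \<Rightarrow> bool) \<Rightarrow> 'a \<Rightarrow> nat" where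
  "degree E x = card (nbhd E x)"

definition vpt_rep :: "'v set \<Rightarrow> ('v \<Rightarrow> 'v \<Rightarrow> bool) \<Rightarrow> 'a set \<Rightarrow> ('a \<Rightarrow> 'a \<Rightarrow> bool)
    \<Rightarrow> ('v \<Rightarrow> 'a list) \<Rightarrow> bool" where
  "vpt_rep VG EG VT ET P \<longleftrightarrow> is_tree VT ET
     \<and> (\<forall>v\<in>VG. is_path VT ET (P v))
     \<and> (\<forall>u\<in>VG. \<forall>v\<in>VG. u \<noteq> v \<longrightarrow> (EG u v \<longleftrightarrow> set (P u) \<inter> set (P v) \<noteq> {}))"

end

theory Submission
  imports Defs
begin

(* Given neighbours y1, y2 of q in the tree T, we add a fresh vertex a, delete the
   edges q y1 and q y2 and add the edges a q, a y1, a y2.  Every representing path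
   that used one of the deleted edges is rerouted through a; since no path contains
   both y1 and y2, a path never needs both detours, so it stays a path.  Vertex
   sets of paths only grow by a, and only for paths containing q, so intersections
   (hence adjacency in G) are unchanged. *)

section \<open>Walks\<close>

fun walk :: "('a \<Rightarrow> 'a \<Rightarrow> bool) \<Rightarrow> 'a list \<Rightarrow> bool" where
  "walk R [] = False"
| "walk R [x] = True"
| "walk R (x # y # zs) = (R x y \<and> walk R (y # zs))"

lemma walk_iff_nth:
  "walk R xs \<longleftrightarrow> xs \<noteq> [] \<and> (\<forall>i. Suc i < length xs \<longrightarrow> R (xs ! i) (xs ! Suc i))"
proof (induction R xs rule: walk.induct)
  case (3 R x y zs)
  have "(\<forall>i. Suc i < length (x # y # zs) \<longrightarrow> R ((x # y # zs) ! i) ((x # y # zs) ! Suc i))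
      \<longleftrightarrow> R x y \<and> (\<forall>i. Suc i < length (y # zs) \<longrightarrow> R ((y # zs) ! i) ((y # zs) ! Suc i))"
    (is "?all \<longleftrightarrow> _")
  proof
    assume ?all
    then show "R x y \<and> (\<forall>i. Suc i < length (y # zs) \<longrightarrow> R ((y # zs) ! i) ((y # zs) ! Suc i))"
      using spec[OF \<open>?all\<close>, of 0] spec[OF \<open>?all\<close>, of "Suc _"] by auto
  qed (auto simp: nth_Cons split: nat.splits)
  with 3 show ?case by simp
qed auto

lemma is_path_iff_walk: "is_path V E xs \<longleftrightarrow> distinct xs \<and> set xs \<subseteq> V \<and> walk E xs"
  unfolding is_path_def walk_iff_nth by auto

lemma walk_append: "walk R (as @ y # cs) \<longleftrightarrow> walk R (as @ [y]) \<and> walk R (y # cs)"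
proof (induction as)
  case (Cons a as)
  then show ?case by (cases as) auto
qed simp

lemma walk_mono: "walk R ws \<Longrightarrow> (\<And>x y. R x y \<Longrightarrow> S x y) \<Longrightarrow> walk S ws"
  by (induction R ws rule: walk.induct) auto

lemma walk_set_closed: "walk R ws \<Longrightarrow> hd ws \<in> V \<Longrightarrow> (\<And>x y. R x y \<Longrightarrow> y \<in> V) \<Longrightarrow> set ws \<subseteq> V"
  by (induction R ws rule: walk.induct) auto

lemma walk_of_rtranclp: "R\<^sup>*\<^sup>* x y \<Longrightarrow> \<exists>ws. walk R ws \<and> hd ws = x \<and> last ws = y"
proof (induction rule: converse_rtranclp_induct)
  case base
  show ?case by (intro exI[of _ "[y]"]) simp
next
  case (step x z)
  then obtain ws where "walk R ws" "hd ws = z" "last ws = y" by blast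
  with step show ?case by (intro exI[of _ "x # ws"]) (cases ws, auto)
qed

text \<open>Cutting out the cycle between two occurrences of a vertex shortens a walk,
  so every walk contains a distinct walk with the same end points.\<close>
lemma walk_distinct:
  "walk R ws \<Longrightarrow> \<exists>ws'. walk R ws' \<and> distinct ws' \<and> hd ws' = hd ws \<and> last ws' = last ws"
proof (induction "length ws" arbitrary: ws rule: less_induct)
  case less
  show ?case
  proof (cases "distinct ws")
    case False
    then obtain as y bs cs where ws: "ws = as @ [y] @ bs @ [y] @ cs"
      using not_distinct_decomp by blast
    let ?w = "as @ y # cs"
    have "walk R (as @ [y])" "walk R (y # bs @ y # cs)"
      using less(2) ws walk_append[of R as y "bs @ y # cs"] by auto
    moreover have "walk R (y # cs)"
      using calculation(2) walk_append[of R "y # bs" y cs] by simp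
    ultimately have "walk R ?w" using walk_append[of R as y cs] by simp
    moreover have "length ?w < length ws" using ws by simp
    ultimately obtain ws' where "walk R ws'" "distinct ws'" "hd ws' = hd ?w" "last ws' = last ?w"
      using less(1) by blast
    moreover have "hd ?w = hd ws" "last ?w = last ws" using ws by (cases as; simp)+
    ultimately show ?thesis by metis
  qed (use less in blast)
qed

section \<open>Trees via bridges\<close>

text \<open>S is a side of the edge u v: it contains u but not v and is closed under all
  edges except the directed edge u v.  Such an S exists iff u v is a bridge.\<close>

definition bridge_side :: "('a \<Rightarrow> 'a \<Rightarrow> bool) \<Rightarrow> 'a \<Rightarrow> 'a \<Rightarrow> 'a set \<Rightarrow> bool" where
  "bridge_side E u v S \<longleftrightarrow>
     u \<in> S \<and> v \<notin> S \<and> (\<forall>x z. x \<in> S \<longrightarrow> E x z \<longrightarrow> \<not> (x = u \<and> z = v) \<longrightarrow> z \<in> S)"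

lemma bridge_side_flip:
  "(\<And>x y. E x y \<Longrightarrow> E y x) \<Longrightarrow> bridge_side E u v S \<Longrightarrow> bridge_side E v u (- S)"
  unfolding bridge_side_def by blast

text \<open>In a tree every edge is a bridge: the vertices reachable from u without using
  the edge u v form a side, because a walk from u to v avoiding that edge would give a
  second u-v path besides [u, v].\<close>
lemma tree_edge_bridge_side:
  assumes tree: "is_tree V E" and uv: "E u v"
  shows "\<exists>S. bridge_side E u v S \<and> S \<subseteq> V"
proof -
  have sg: "sgraph V E" using tree is_tree_def by blast
  then have EV: "\<And>x y. E x y \<Longrightarrow> x \<in> V \<and> y \<in> V" and "u \<noteq> v"
    using uv unfolding sgraph_def by auto
  define R where "R = (\<lambda>x z. E x z \<and> \<not> (x = u \<and> z = v) \<and> \<not> (x = v \<and> z = u))"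
  define S where "S = {x. R\<^sup>*\<^sup>* u x} \<inter> V"
  have "\<not> R\<^sup>*\<^sup>* u v"
  proof
    assume "R\<^sup>*\<^sup>* u v"
    then obtain ws where ws: "walk R ws" "distinct ws" "hd ws = u" "last ws = v"
      using walk_of_rtranclp walk_distinct by metis
    have wE: "walk E ws" using walk_mono[OF ws(1)] by (simp add: R_def)
    have "set ws \<subseteq> V" using walk_set_closed[OF wE] ws(3) EV[OF uv] EV by blast
    then have "is_path V E ws" using wE ws(2) by (simp add: is_path_iff_walk)
    moreover have "is_path V E [u, v]" using uv EV[OF uv] \<open>u \<noteq> v\<close> by (simp add: is_path_iff_walk)
    ultimately have "ws = [u, v]" using tree ws(3,4) unfolding is_tree_def by auto
    then show False using ws(1) by (simp add: R_def)
  qed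
  moreover have "z \<in> S" if "x \<in> S" "E x z" "\<not> (x = u \<and> z = v)" for x z
  proof (cases "x = v \<and> z = u")
    case False
    then have "R x z" using that R_def by blast
    then show ?thesis using that EV unfolding S_def by (auto intro: rtranclp.rtrancl_into_rtrancl)
  qed (use EV uv S_def in auto)
  ultimately show ?thesis using EV[OF uv] unfolding bridge_side_def S_def by blast
qed

text \<open>A walk that avoids u cannot cross the edge u v, so it stays on the side of the
  edge where it starts.\<close>
lemma walk_stays_in_side:
  assumes "bridge_side E u v S"
  shows "walk E zs \<Longrightarrow> u \<notin> set zs \<Longrightarrow> hd zs \<in> S \<Longrightarrow> last zs \<in> S"
  using assms by (induction E zs rule: walk.induct) (auto simp: bridge_side_def)

lemma walk_stays_out_of_side:
  assumes "bridge_side E u v S" "\<And>x y. E x y \<Longrightarrow> E y x"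
  shows "walk E zs \<Longrightarrow> u \<notin> set zs \<Longrightarrow> hd zs \<notin> S \<Longrightarrow> last zs \<notin> S"
  using assms by (induction E zs rule: walk.induct) (auto simp: bridge_side_def, blast)

text \<open>Conversely, if every edge is a bridge then distinct walks are determined by their
  end points: two such walks from a that leave along different edges a b and a c end
  on different sides of the edge a b.\<close>
lemma unique_distinct_walk:
  assumes sym: "\<And>x y. E x y \<Longrightarrow> E y x"
    and bridges: "\<And>u v. E u v \<Longrightarrow> \<exists>S. bridge_side E u v S"
  shows "walk E xs \<Longrightarrow> distinct xs \<Longrightarrow> walk E ys \<Longrightarrow> distinct ys
    \<Longrightarrow> hd xs = hd ys \<Longrightarrow> last xs = last ys \<Longrightarrow> xs = ys"
proof (induction xs arbitrary: ys rule: induct_list012)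
  case (2 x)
  then show ?case by (cases ys) (auto, metis last_in_set)
next
  case (3 a b xs)
  obtain c ys' where ys: "ys = a # c # ys'"
    using 3 by (cases ys rule: remdups_adj.cases) (auto, metis last_in_set)
  show ?case
  proof (cases "b = c")
    case True
    then have "b # xs = c # ys'" using 3 ys by (intro "3.IH"(2)) auto
    then show ?thesis using ys True by simp
  next
    case False
    have "E a b" using "3.prems"(1) by simp
    then obtain S where S: "bridge_side E a b S" using bridges by blast
    have "E a c" using 3 ys by simp
    then have "c \<in> S" using S False unfolding bridge_side_def by blast
    then have "last (c # ys') \<in> S"
      using walk_stays_in_side[OF S, of "c # ys'"] 3 ys by simp
    moreover have "last (b # xs) \<notin> S"
      using walk_stays_out_of_side[OF S sym, of "b # xs"] 3 S unfolding bridge_side_def by simp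
    ultimately show ?thesis using 3 ys by simp
  qed
qed simp

lemma is_treeI_bridges:
  assumes "sgraph V E" "connected_graph V E"
    and bridges: "\<And>u v. E u v \<Longrightarrow> \<exists>S. bridge_side E u v S"
  shows "is_tree V E"
proof -
  have sym: "\<And>x y. E x y \<Longrightarrow> E y x" using assms(1) unfolding sgraph_def by blast
  show ?thesis
    unfolding is_tree_def is_path_iff_walk
    using assms(1,2) unique_distinct_walk[OF sym bridges] by blast
qed

section \<open>Splitting off two edges at a vertex\<close>

definition split_edges :: "('a \<Rightarrow> 'a \<Rightarrow> bool) \<Rightarrow> 'a \<Rightarrow> 'a \<Rightarrow> 'a \<Rightarrow> 'a \<Rightarrow> 'a \<Rightarrow> 'a \<Rightarrow> bool" where
  "split_edges E q y1 y2 a x z \<longleftrightarrow>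
     (E x z \<and> \<not> (x = q \<and> z \<in> {y1, y2}) \<and> \<not> (z = q \<and> x \<in> {y1, y2}))
     \<or> (x = a \<and> z \<in> {q, y1, y2}) \<or> (z = a \<and> x \<in> {q, y1, y2})"

text \<open>Rerouting a path: whenever the path uses a deleted edge, insert a between its
  ends.  A path containing at most one of y1, y2 uses at most one deleted edge, so a
  is inserted at most once and the result is again a path; a appears only if the path
  passes through q.\<close>
lemma reroute_walk:
  assumes "a \<noteq> q" "a \<noteq> y1" "a \<noteq> y2"
  shows "walk E xs \<Longrightarrow> distinct xs \<Longrightarrow> a \<notin> set xs \<Longrightarrow> \<not> (y1 \<in> set xs \<and> y2 \<in> set xs) \<Longrightarrow>
    \<exists>xs'. walk (split_edges E q y1 y2 a) xs' \<and> distinct xs' \<and> hd xs' = hd xs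
      \<and> set xs \<subseteq> set xs' \<and> set xs' \<subseteq> insert a (set xs)
      \<and> (a \<in> set xs' \<longrightarrow> q \<in> set xs \<and> (y1 \<in> set xs \<or> y2 \<in> set xs))"
proof (induction xs rule: induct_list012)
  case (2 x)
  then show ?case by (intro exI[of _ "[x]"]) simp
next
  case (3 x y zs)
  let ?E' = "split_edges E q y1 y2 a"
  obtain ys' where ys': "walk ?E' ys'" "distinct ys'" "hd ys' = y" "set (y # zs) \<subseteq> set ys'"
    "set ys' \<subseteq> insert a (set (y # zs))"
    "a \<in> set ys' \<longrightarrow> q \<in> set (y # zs) \<and> (y1 \<in> set (y # zs) \<or> y2 \<in> set (y # zs))"
    using "3.IH"(2) "3.prems" by auto
  then obtain u us where ys'_Cons: "ys' = u # us" by (cases ys') auto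
  have x_new: "x \<noteq> a" "x \<notin> set ys'" using ys'(5) "3.prems"(2,3) by auto
  show ?case
  proof (cases "?E' x y")
    case True
    then show ?thesis
      using ys' ys'_Cons x_new "3.prems"(2) by (intro exI[of _ "x # ys'"]) (use x_new(1)[symmetric] in auto)
  next
    case False
    then have deleted: "(x = q \<and> (y = y1 \<or> y = y2)) \<or> ((x = y1 \<or> x = y2) \<and> y = q)"
      using "3.prems"(1) unfolding split_edges_def by auto
    then have "a \<notin> set ys'" using ys'(6) "3.prems"(2,4) by auto
    moreover have "walk ?E' (x # a # ys')"
      using deleted ys'(1,3) ys'_Cons unfolding split_edges_def by auto
    ultimately show ?thesis
      using deleted ys' x_new assms by (intro exI[of _ "x # a # ys'"]) auto
  qed
qed simp

locale tree_split =
  fixes V :: "'a set" and E :: "'a \<Rightarrow> 'a \<Rightarrow> bool" and q y1 y2 a :: 'a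
  assumes tree: "is_tree V E"
    and edge1: "E q y1" and edge2: "E q y2" and y_distinct: "y1 \<noteq> y2"
    and fresh: "a \<notin> V"
begin

abbreviation Split :: "'a \<Rightarrow> 'a \<Rightarrow> bool" where
  "Split \<equiv> split_edges E q y1 y2 a"

lemma sgraph: "sgraph V E"
  using tree unfolding is_tree_def by blast

lemma finite_V: "finite V"
  and in_V: "E x y \<Longrightarrow> x \<in> V \<and> y \<in> V"
  and sym: "E x y \<Longrightarrow> E y x"
  and irrefl: "\<not> E x x"
  using sgraph unfolding sgraph_def by auto

lemma in_V_points: "q \<in> V" "y1 \<in> V" "y2 \<in> V"
  using in_V edge1 edge2 by auto

lemma points_distinct: "q \<noteq> y1" "q \<noteq> y2" "a \<noteq> q" "a \<noteq> y1" "a \<noteq> y2"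
  using irrefl edge1 edge2 in_V_points fresh by auto

lemma no_old_edge_at_a: "\<not> E a x" "\<not> E x a"
  using in_V fresh by blast+

lemma Split_sym: "Split x z \<Longrightarrow> Split z x"
  unfolding split_edges_def using sym by blast

lemma sgraph_Split: "sgraph (insert a V) Split"
proof -
  have "x \<in> insert a V \<and> z \<in> insert a V" if "Split x z" for x z
    using that in_V in_V_points unfolding split_edges_def by blast
  moreover have "\<not> Split x x" for x
    using irrefl points_distinct unfolding split_edges_def by blast
  ultimately show ?thesis using finite_V Split_sym unfolding sgraph_def by blast
qed

text \<open>Every old edge is replaced by a walk of length at most two through a, so the
  split graph is still connected.\<close>
lemma old_edge_reachable: "E u w \<Longrightarrow> Split\<^sup>*\<^sup>* u w"
proof (cases "Split u w")
  case False
  assume "E u w"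
  with False have "Split u a" "Split a w" unfolding split_edges_def by auto
  then show ?thesis by (meson rtranclp.rtrancl_into_rtrancl r_into_rtranclp)
qed auto

lemma connected_Split: "connected_graph (insert a V) Split"
proof -
  have reach: "Split\<^sup>*\<^sup>* x z" if "E\<^sup>*\<^sup>* x z" for x z
    using that by (induction rule: rtranclp_induct) (auto intro: rtranclp_trans old_edge_reachable)
  have "Split a q" "Split q a" unfolding split_edges_def by auto
  moreover have "E\<^sup>*\<^sup>* x q" "E\<^sup>*\<^sup>* q x" if "x \<in> V" for x
    using tree that in_V_points unfolding is_tree_def connected_graph_def by auto
  ultimately have "Split\<^sup>*\<^sup>* x q \<and> Split\<^sup>*\<^sup>* q x" if "x \<in> insert a V" for x
    using that reach by auto
  then show ?thesis unfolding connected_graph_def by (meson insert_not_empty rtranclp_trans)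
qed

text \<open>A surviving old edge u v stays a bridge: take its old side S and add a exactly
  when q \<in> S (then y1, y2 \<in> S as well, since the edges q y1, q y2 differ from u v).\<close>
lemma old_edge_bridge_side:
  assumes uv: "E u v" "\<not> (u = q \<and> v \<in> {y1, y2})" "\<not> (v = q \<and> u \<in> {y1, y2})"
  shows "\<exists>S. bridge_side Split u v S"
proof -
  obtain S where S: "bridge_side E u v S" "S \<subseteq> V"
    using tree_edge_bridge_side[OF tree uv(1)] by blast
  then have S_closed: "\<And>x z. x \<in> S \<Longrightarrow> E x z \<Longrightarrow> \<not> (x = u \<and> z = v) \<Longrightarrow> z \<in> S"
    unfolding bridge_side_def by blast
  have q_side: "q \<in> S \<longleftrightarrow> y1 \<in> S" "q \<in> S \<longleftrightarrow> y2 \<in> S"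
    using S_closed[of q y1] S_closed[of y1 q] S_closed[of q y2] S_closed[of y2 q]
      edge1 edge2 sym[OF edge1] sym[OF edge2] uv(2,3) by blast+
  define S' where "S' = (if q \<in> S then insert a S else S)"
  have "z \<in> S'" if x: "x \<in> S'" and xz: "Split x z" "\<not> (x = u \<and> z = v)" for x z
  proof (cases "x = a")
    case True
    then have "q \<in> S" "z \<in> {q, y1, y2}"
      using x xz(1) S(2) fresh no_old_edge_at_a unfolding S'_def split_edges_def
      by (auto split: if_splits)
    then show ?thesis using q_side unfolding S'_def by auto
  next
    case False
    then have "x \<in> S" using x unfolding S'_def by (auto split: if_splits)
    show ?thesis
    proof (cases "z = a")
      case True
      then have "x \<in> {q, y1, y2}" using xz(1) \<open>x \<noteq> a\<close> no_old_edge_at_a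
        unfolding split_edges_def by auto
      then show ?thesis using \<open>x \<in> S\<close> q_side True unfolding S'_def by auto
    next
      case False
      then have "E x z" using xz(1) \<open>x \<noteq> a\<close> unfolding split_edges_def by auto
      then show ?thesis using S_closed[OF \<open>x \<in> S\<close> _ xz(2)] unfolding S'_def by auto
    qed
  qed
  moreover have "u \<in> S'" "v \<notin> S'"
    using S(1) in_V[OF uv(1)] fresh unfolding S'_def bridge_side_def by auto
  ultimately have "bridge_side Split u v S'" unfolding bridge_side_def by blast
  then show ?thesis by blast
qed

text \<open>The three new edges are bridges: removing a q separates the old y1-side and
  y2-side of the deleted edges from q, and removing a y_i isolates the old y_i-side.\<close>
lemma new_edge_bridge_sides:
  obtains Sq S1 S2 where "bridge_side Split a q Sq" "bridge_side Split y1 a S1"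
    "bridge_side Split y2 a S2"
proof -
  obtain S1 where S1: "bridge_side E y1 q S1" "S1 \<subseteq> V"
    using tree_edge_bridge_side[OF tree sym[OF edge1]] by blast
  obtain S2 where S2: "bridge_side E y2 q S2" "S2 \<subseteq> V"
    using tree_edge_bridge_side[OF tree sym[OF edge2]] by blast
  have S1_closed: "\<And>x z. x \<in> S1 \<Longrightarrow> E x z \<Longrightarrow> \<not> (x = y1 \<and> z = q) \<Longrightarrow> z \<in> S1"
    and S2_closed: "\<And>x z. x \<in> S2 \<Longrightarrow> E x z \<Longrightarrow> \<not> (x = y2 \<and> z = q) \<Longrightarrow> z \<in> S2"
    and sides: "y1 \<in> S1" "q \<notin> S1" "y2 \<in> S2" "q \<notin> S2"
    using S1(1) S2(1) unfolding bridge_side_def by blast+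
  have "y2 \<notin> S1" using S1_closed[of y2 q] sides(2) sym[OF edge2] y_distinct by blast
  moreover have "y1 \<notin> S2" using S2_closed[of y1 q] sides(4) sym[OF edge1] y_distinct by blast
  moreover have "a \<notin> S1" "a \<notin> S2" using S1(2) S2(2) fresh by auto
  ultimately have "bridge_side Split a q (S1 \<union> S2 \<union> {a})" "bridge_side Split y1 a S1"
      "bridge_side Split y2 a S2"
    using S1_closed S2_closed sides points_distinct no_old_edge_at_a
    unfolding bridge_side_def split_edges_def by auto
  then show thesis using that by blast
qed

lemma tree_Split: "is_tree (insert a V) Split"
proof (rule is_treeI_bridges[OF sgraph_Split connected_Split])
  obtain Sq S1 S2 where new: "bridge_side Split a q Sq" "bridge_side Split y1 a S1"
    "bridge_side Split y2 a S2" by (rule new_edge_bridge_sides)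
  fix u v assume "Split u v"
  then consider "E u v" "\<not> (u = q \<and> v \<in> {y1, y2})" "\<not> (v = q \<and> u \<in> {y1, y2})"
    | "(u, v) \<in> {(a, q), (y1, a), (y2, a)}" | "(v, u) \<in> {(a, q), (y1, a), (y2, a)}"
    unfolding split_edges_def by auto
  then show "\<exists>S. bridge_side Split u v S"
  proof cases
    case 1
    then show ?thesis by (rule old_edge_bridge_side)
  next
    case 2
    then show ?thesis using new by blast
  next
    case 3
    then show ?thesis using new bridge_side_flip[of Split, OF Split_sym] by blast
  qed
qed

lemma finite_nbhd: "finite (nbhd E x)"
  using finite_subset[OF _ finite_V] in_V unfolding nbhd_def by blast

lemma degree_a: "degree Split a = 3"
proof -
  have "nbhd Split a = {q, y1, y2}"
    unfolding nbhd_def split_edges_def using no_old_edge_at_a points_distinct by auto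
  then show ?thesis unfolding degree_def using points_distinct y_distinct by simp
qed

text \<open>q loses its two neighbours y1, y2 and gains a.\<close>
lemma degree_q: "degree Split q = degree E q - 1"
proof -
  have "nbhd Split q = insert a (nbhd E q - {y1, y2})"
    unfolding nbhd_def split_edges_def using no_old_edge_at_a points_distinct by auto
  moreover have "{y1, y2} \<subseteq> nbhd E q" "a \<notin> nbhd E q"
    using edge1 edge2 no_old_edge_at_a unfolding nbhd_def by auto
  moreover have "2 \<le> card (nbhd E q)"
    using card_mono[OF finite_nbhd calculation(2)] y_distinct by simp
  ultimately show ?thesis
    unfolding degree_def using finite_nbhd card_Diff_subset[of "{y1, y2}" "nbhd E q"] y_distinct
    by simp
qed

text \<open>y1 and y2 exchange their neighbour q for a; all other vertices are untouched.\<close>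
lemma degree_other: "x \<noteq> q \<Longrightarrow> x \<noteq> a \<Longrightarrow> degree Split x = degree E x"
proof (cases "x = y1 \<or> x = y2")
  case True
  assume x: "x \<noteq> q" "x \<noteq> a"
  have "nbhd Split x = insert a (nbhd E x - {q})" and q_nb: "q \<in> nbhd E x"
    unfolding nbhd_def split_edges_def
    using True x no_old_edge_at_a points_distinct y_distinct sym edge1 edge2 by auto
  moreover have "a \<notin> nbhd E x" using no_old_edge_at_a unfolding nbhd_def by auto
  moreover have "card (nbhd E x) > 0" using q_nb finite_nbhd card_gt_0_iff by blast
  ultimately show ?thesis
    unfolding degree_def using finite_nbhd q_nb by (simp add: card_Diff_singleton)
next
  case False
  assume "x \<noteq> q" "x \<noteq> a"
  with False have "nbhd Split x = nbhd E x" unfolding nbhd_def split_edges_def by auto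
  then show ?thesis unfolding degree_def by simp
qed

text \<open>A VPT representation whose paths never contain both y1 and y2 transfers to
  the split tree: rerouted paths only gain a, and only when they contain q, so
  two paths meet afterwards iff they met before.\<close>
lemma vpt_rep_Split:
  assumes rep: "vpt_rep VG EG V E P"
    and no_both: "\<forall>v\<in>VG. \<not> {y1, y2} \<subseteq> set (P v)"
  shows "\<exists>P'. vpt_rep VG EG (insert a V) Split P'"
proof -
  have paths: "\<And>v. v \<in> VG \<Longrightarrow> is_path V E (P v)"
    and adj: "\<And>u v. u \<in> VG \<Longrightarrow> v \<in> VG \<Longrightarrow> u \<noteq> v \<Longrightarrow> EG u v \<longleftrightarrow> set (P u) \<inter> set (P v) \<noteq> {}"
    using rep unfolding vpt_rep_def by auto
  have "\<exists>xs'. is_path (insert a V) Split xs' \<and> set (P v) \<subseteq> set xs'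
      \<and> set xs' \<subseteq> insert a (set (P v)) \<and> (a \<in> set xs' \<longrightarrow> q \<in> set (P v))" if v: "v \<in> VG" for v
  proof -
    have "walk E (P v)" "distinct (P v)" "set (P v) \<subseteq> V"
      using paths[OF v] unfolding is_path_iff_walk by auto
    then show ?thesis
      using reroute_walk[OF points_distinct(3-5), of E "P v"] no_both v fresh
      unfolding is_path_iff_walk by blast
  qed
  then obtain P' where P': "\<And>v. v \<in> VG \<Longrightarrow> is_path (insert a V) Split (P' v)
      \<and> set (P v) \<subseteq> set (P' v) \<and> set (P' v) \<subseteq> insert a (set (P v)) \<and> (a \<in> set (P' v) \<longrightarrow> q \<in> set (P v))"
    by metis
  have "set (P u) \<inter> set (P v) \<noteq> {} \<longleftrightarrow> set (P' u) \<inter> set (P' v) \<noteq> {}"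
    if "u \<in> VG" "v \<in> VG" for u v
    using P'[OF that(1)] P'[OF that(2)] by blast
  then have "vpt_rep VG EG (insert a V) Split P'"
    unfolding vpt_rep_def using tree_Split P' adj by auto
  then show ?thesis by blast
qed

end

theorem mainTheorem3:
  fixes VG :: "'v set" and EG :: "'v \<Rightarrow> 'v \<Rightarrow> bool"
    and VT :: "'a set" and ET :: "'a \<Rightarrow> 'a \<Rightarrow> bool"
    and P :: "'v \<Rightarrow> 'a list" and q y1 y2 :: 'a and h :: nat
  assumes inf: "infinite (UNIV :: 'a set)"
    and G: "sgraph VG EG" "connected_graph VG EG"
    and rep: "vpt_rep VG EG VT ET P"
    and q: "q \<in> VT" "degree ET q = h" "h \<ge> 4"
    and y: "y1 \<in> nbhd ET q" "y2 \<in> nbhd ET q" "y1 \<noteq> y2"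
    and sep: "\<forall>v\<in>VG. \<not> {y1, y2} \<subseteq> set (P v)"
  shows "\<exists>aq ET' P'. aq \<notin> VT \<and> vpt_rep VG EG (insert aq VT) ET' P'
           \<and> degree ET' aq = 3 \<and> degree ET' q = h - 1
           \<and> (\<forall>x \<in> insert aq VT - {q, aq}. degree ET' x = degree ET x)"
proof -
  have tree: "is_tree VT ET" using rep unfolding vpt_rep_def by blast
  then have "finite VT" unfolding is_tree_def sgraph_def by blast
  then obtain aq where aq: "aq \<notin> VT" using ex_new_if_finite[OF inf] by blast
  interpret tree_split VT ET q y1 y2 aq
    using tree y aq by unfold_locales (auto simp: nbhd_def)
  obtain P' where "vpt_rep VG EG (insert aq VT) Split P'"
    using vpt_rep_Split[OF rep sep] by blast
  then show ?thesis
    using aq degree_a degree_q degree_other q(2) by blast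
qed

end
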